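(* Let $X$ be the circle $\mathbb{S}^1$ or the interval $[0,1]$, and let $f\colon X\to X$ be a homeomorphism. If $\mu$ is a Borel probability measure that is inner-distal with respect to $f$, then $\operatorname{supp}(\mu)\subseteq\Omega(f)$.
   Context: $\mathcal{P}(x)=\{y\colon \inf_{n\in\mathbb{Z}} d(f^n(x),f^n(y))=0\}$; $\mu$ is inner-distal w.r.t. $f$ if $\mu(\operatorname{Int}\mathcal{P}(x))=0$ for all $x$. $\operatorname{supp}(\mu)=\{x\colon \mu(U)>0$ for every neighborhood $U$ of $x\}$. The non-wandering set $\Omega(f)$ is the set of $x$ such that $U\cap\bigcup_{n\ge1}f^n(U)\neq\emptyset$ for every neighborhood $U$ of $x$. *)

theory Defs
  imports "HOL-Analysis.Analysis" "HOL-Probability.Probability"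
begin

definition zorbit :: "('a \<Rightarrow> 'a) \<Rightarrow> 'a set \<Rightarrow> int \<Rightarrow> 'a \<Rightarrow> 'a" where
  "zorbit f X n = (if n \<ge> 0 then f ^^ nat n else (inv_into X f) ^^ nat (- n))"

definition proximal_cell :: "('a::metric_space \<Rightarrow> 'a) \<Rightarrow> 'a set \<Rightarrow> 'a \<Rightarrow> 'a set" where
  "proximal_cell f X x =
     {y \<in> X. (INF n::int. dist (zorbit f X n x) (zorbit f X n y)) = 0}"

definition inner_distal :: "('a::metric_space \<Rightarrow> 'a) \<Rightarrow> 'a set \<Rightarrow> 'a measure \<Rightarrow> bool" where
  "inner_distal f X M \<longleftrightarrow>
     (\<forall>x\<in>X. emeasure M ((top_of_set X) interior_of (proximal_cell f X x)) = 0)"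

definition support_on :: "'a::topological_space set \<Rightarrow> 'a measure \<Rightarrow> 'a set" where
  "support_on X M = {x \<in> X. \<forall>U. openin (top_of_set X) U \<and> x \<in> U \<longrightarrow> emeasure M U > 0}"

definition nonwandering :: "('a::topological_space \<Rightarrow> 'a) \<Rightarrow> 'a set \<Rightarrow> 'a set" where
  "nonwandering f X = {x \<in> X. \<forall>U. openin (top_of_set X) U \<and> x \<in> U \<longrightarrow>
       (\<exists>n\<ge>1. U \<inter> (f ^^ n) ` U \<noteq> {})}"

end

theory Submission
  imports Defs
begin

text \<open>
  Suppose \<open>x\<close> lies in the support of \<open>\<mu>\<close> but is wandering. Since \<open>X\<close> is locally connected,
  \<open>x\<close> has a connected open neighbourhood \<open>J\<close> whose forward images \<open>f\<^sup>n(J)\<close> are pairwise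
  disjoint. In the circle or the interval, each \<open>\<epsilon>\<close>-large connected set contains a point of a
  fixed finite \<open>\<epsilon>\<close>-grid, so only finitely many of the disjoint connected sets \<open>f\<^sup>n(J)\<close> can have
  two points \<open>\<epsilon>\<close> apart. Hence every \<open>y \<in> J\<close> is proximal to \<open>x\<close>, i.e. \<open>J \<subseteq> Int P(x)\<close>, and
  inner-distality gives \<open>\<mu>(J) = 0\<close>, contradicting \<open>x \<in> supp(\<mu>)\<close>.
\<close>

definition has_finite_transversals :: "'a::metric_space set \<Rightarrow> bool" where
  "has_finite_transversals X \<longleftrightarrow> (\<forall>\<epsilon>>0. \<exists>F. finite F \<and>
     (\<forall>C a b. connected C \<longrightarrow> C \<subseteq> X \<longrightarrow> a \<in> C \<longrightarrow> b \<in> C \<longrightarrow> \<epsilon> \<le> dist a b \<longrightarrow> C \<inter> F \<noteq> {}))"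

lemma ceiling_divide_mult_between:
  fixes \<delta> lo hi :: real
  assumes "\<delta> > 0" "\<delta> \<le> hi - lo"
  shows "lo \<le> \<lceil>lo / \<delta>\<rceil> * \<delta>" "\<lceil>lo / \<delta>\<rceil> * \<delta> \<le> hi"
proof -
  show "lo \<le> \<lceil>lo / \<delta>\<rceil> * \<delta>"
    using assms(1) by (simp add: pos_divide_le_eq[symmetric])
  have "\<lceil>lo / \<delta>\<rceil> < lo / \<delta> + 1"
    by linarith
  then show "\<lceil>lo / \<delta>\<rceil> * \<delta> \<le> hi"
    using assms by (simp add: field_simps)
qed

text \<open>
  The transversal is the exceptional set \<open>E\<close> together with the image of a grid in \<open>[l, h]\<close>
  whose mesh is a modulus of uniform continuity of \<open>\<phi>\<close>: off \<open>E\<close> a connected set is mapped by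
  \<open>\<psi>\<close> onto an interval that is longer than the mesh.
\<close>
lemma has_finite_transversals_if_parametrized:
  fixes \<phi> :: "real \<Rightarrow> 'a::metric_space" and \<psi> :: "'a \<Rightarrow> real"
  assumes \<phi>: "continuous_on {l..h} \<phi>" and E: "finite E" and \<psi>: "continuous_on (X - E) \<psi>"
    and \<psi>_range: "\<And>z. z \<in> X \<Longrightarrow> \<psi> z \<in> {l..h}" and \<phi>_\<psi>: "\<And>z. z \<in> X \<Longrightarrow> \<phi> (\<psi> z) = z"
  shows "has_finite_transversals X"
  unfolding has_finite_transversals_def
proof (intro allI impI)
  fix \<epsilon> :: real assume "\<epsilon> > 0"
  obtain \<delta> where \<delta>: "\<delta> > 0"
    and close: "\<And>s t. s \<in> {l..h} \<Longrightarrow> t \<in> {l..h} \<Longrightarrow> dist t s < \<delta> \<Longrightarrow> dist (\<phi> t) (\<phi> s) < \<epsilon>"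
    using compact_uniformly_continuous[OF \<phi> compact_Icc] \<open>\<epsilon> > 0\<close>
    unfolding uniformly_continuous_on_def by metis
  define F where "F = E \<union> (\<lambda>k::int. \<phi> (k * \<delta>)) ` {\<lceil>l / \<delta>\<rceil>..\<lfloor>h / \<delta>\<rfloor>}"
  have "C \<inter> F \<noteq> {}"
    if C: "connected C" "C \<subseteq> X" "a \<in> C" "b \<in> C" "\<epsilon> \<le> dist a b" for C a b
  proof (cases "C \<inter> E = {}")
    case True
    define lo where "lo = min (\<psi> a) (\<psi> b)"
    define hi where "hi = max (\<psi> a) (\<psi> b)"
    have "lo \<in> \<psi> ` C" "hi \<in> \<psi> ` C"
      using C(3,4) by (simp_all add: lo_def hi_def min_def max_def)
    moreover have "connected (\<psi> ` C)"
      using C(1,2) True by (intro connected_continuous_image continuous_on_subset[OF \<psi>]) auto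
    ultimately have lo_hi: "{lo..hi} \<subseteq> \<psi> ` C"
      using connected_contains_Icc by blast
    have "\<not> dist (\<psi> a) (\<psi> b) < \<delta>"
      using close[of "\<psi> b" "\<psi> a"] \<psi>_range \<phi>_\<psi> C(2-5) by (auto simp: subset_iff)
    then have "\<delta> \<le> hi - lo"
      by (simp add: lo_def hi_def dist_real_def)
    define k where "k = \<lceil>lo / \<delta>\<rceil>"
    have k: "lo \<le> k * \<delta>" "k * \<delta> \<le> hi"
      using ceiling_divide_mult_between[OF \<delta> \<open>\<delta> \<le> hi - lo\<close>] by (simp_all add: k_def)
    then obtain z where z: "z \<in> C" "\<psi> z = k * \<delta>"
      using lo_hi by (auto simp del: of_int_mult)
    have "l \<le> k * \<delta>" "k * \<delta> \<le> h"
      using z \<psi>_range C(2) by (metis atLeastAtMost_iff subsetD)+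
    then have "k \<in> {\<lceil>l / \<delta>\<rceil>..\<lfloor>h / \<delta>\<rfloor>}"
      using \<delta> by (simp add: ceiling_le_iff le_floor_iff field_simps)
    moreover have "z = \<phi> (k * \<delta>)"
      using z \<phi>_\<psi> C(2) by (metis subsetD)
    ultimately show ?thesis
      using z(1) by (auto simp: F_def)
  qed (auto simp: F_def)
  moreover have "finite F"
    using E by (simp add: F_def)
  ultimately show "\<exists>F. finite F \<and> (\<forall>C a b. connected C \<longrightarrow> C \<subseteq> X \<longrightarrow> a \<in> C \<longrightarrow> b \<in> C \<longrightarrow>
      \<epsilon> \<le> dist a b \<longrightarrow> C \<inter> F \<noteq> {})"
    by blast
qed

lemma has_finite_transversals_unit_interval:
  "has_finite_transversals (complex_of_real ` {0..1})"
  by (rule has_finite_transversals_if_parametrized[where \<phi> = complex_of_real and \<psi> = Re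
        and E = "{}" and l = 0 and h = 1])
     (auto intro!: continuous_intros)

lemma has_finite_transversals_unit_circle: "has_finite_transversals (sphere (0::complex) 1)"
proof (rule has_finite_transversals_if_parametrized[where \<phi> = "\<lambda>t. exp (\<i> * of_real t)"
      and \<psi> = Arg2pi and E = "{1}" and l = 0 and h = "2 * pi"])
  have "z \<notin> \<real>\<^sub>\<ge>\<^sub>0" if "z \<in> sphere 0 1 - {1}" for z :: complex
    using that by (auto elim!: nonneg_Reals_cases)
  then show "continuous_on (sphere 0 1 - {1}) Arg2pi"
    by (intro continuous_at_imp_continuous_on ballI continuous_at_Arg2pi)
qed (auto intro!: continuous_intros simp: Arg2pi_ge_0 Arg2pi_lt_2pi less_imp_le complex_norm_eq_1_exp)

lemma locally_connected_unit_interval: "locally connected (complex_of_real ` {0..1})"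
  by (intro convex_imp_locally_connected convex_linear_image[OF linear_of_real] convex_real_interval)

lemma finite_wide_members_of_disjoint_connected:
  assumes X: "has_finite_transversals X" and "\<epsilon> > 0"
    and K: "\<And>i. connected (K i)" "\<And>i. K i \<subseteq> X" and disj: "disjoint_family K"
  shows "finite {i. \<exists>a\<in>K i. \<exists>b\<in>K i. \<epsilon> \<le> dist a b}" (is "finite ?W")
proof -
  obtain F where "finite F" and F: "\<And>C a b. connected C \<Longrightarrow> C \<subseteq> X \<Longrightarrow>
      a \<in> C \<Longrightarrow> b \<in> C \<Longrightarrow> \<epsilon> \<le> dist a b \<Longrightarrow> C \<inter> F \<noteq> {}"
    using X \<open>\<epsilon> > 0\<close> unfolding has_finite_transversals_def by meson
  have "\<forall>i\<in>?W. \<exists>q. q \<in> K i \<inter> F"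
  proof
    fix i assume "i \<in> ?W"
    then obtain a b where "a \<in> K i" "b \<in> K i" "\<epsilon> \<le> dist a b"
      by blast
    then show "\<exists>q. q \<in> K i \<inter> F"
      using F[OF K] by blast
  qed
  then obtain p where p: "\<forall>i\<in>?W. p i \<in> K i \<inter> F"
    by (rule bchoice[THEN exE])
  have "inj_on p ?W"
  proof (rule inj_onI)
    fix i j assume "i \<in> ?W" "j \<in> ?W" "p i = p j"
    have "p i \<in> K i \<inter> K j"
      using bspec[OF p \<open>i \<in> ?W\<close>] bspec[OF p \<open>j \<in> ?W\<close>] \<open>p i = p j\<close> by simp
    then show "i = j"
      using disjoint_family_onD[OF disj UNIV_I UNIV_I, of i j] by blast
  qed
  moreover have "p ` ?W \<subseteq> F"
    using p by blast
  ultimately show ?thesis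
    using \<open>finite F\<close> by (rule inj_on_finite)
qed

lemma disjoint_family_funpow_image:
  assumes f: "bij_betw f X X" and "J \<subseteq> X" and wandering: "\<And>n. n \<ge> 1 \<Longrightarrow> J \<inter> (f ^^ n) ` J = {}"
  shows "disjoint_family (\<lambda>n. (f ^^ n) ` J)"
proof -
  have "(f ^^ m) ` J \<inter> (f ^^ n) ` J = {}" if "m < n" for m n
  proof (rule ccontr)
    define k where "k = n - m"
    assume "(f ^^ m) ` J \<inter> (f ^^ n) ` J \<noteq> {}"
    moreover have "f ^^ n = f ^^ m \<circ> f ^^ k"
      using \<open>m < n\<close> by (simp add: k_def flip: funpow_add)
    ultimately obtain u v where uv: "u \<in> J" "v \<in> J" "(f ^^ m) u = (f ^^ m) ((f ^^ k) v)"
      by auto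
    have "bij_betw (f ^^ m) X X" "bij_betw (f ^^ k) X X"
      using f by (simp_all add: bij_betw_funpow)
    then have "u = (f ^^ k) v"
      using uv \<open>J \<subseteq> X\<close> by (metis bij_betw_apply bij_betw_imp_inj_on inj_on_eq_iff subsetD)
    moreover have "k \<ge> 1"
      using \<open>m < n\<close> by (simp add: k_def)
    ultimately show False
      using wandering uv(1,2) by blast
  qed
  then show ?thesis
    unfolding disjoint_family_on_def by (metis Int_commute linorder_neqE_nat)
qed

lemma mem_proximal_cellI:
  assumes "y \<in> X" and small: "\<And>\<epsilon>. \<epsilon> > 0 \<Longrightarrow> \<exists>n. dist ((f ^^ n) x) ((f ^^ n) y) < \<epsilon>"
  shows "y \<in> proximal_cell f X x"
proof -
  define D where "D n = dist (zorbit f X n x) (zorbit f X n y)" for n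
  have "(INF n. D n) \<le> 0"
  proof (rule field_le_epsilon)
    fix \<epsilon> :: real assume "\<epsilon> > 0"
    then obtain n where "D (int n) < \<epsilon>"
      using small by (auto simp: D_def zorbit_def)
    then show "(INF n. D n) \<le> 0 + \<epsilon>"
      by (intro cINF_lower2[of D UNIV "int n"]) (auto simp: D_def intro: bdd_belowI[of _ 0])
  qed
  moreover have "0 \<le> (INF n. D n)"
    by (rule cINF_greatest) (auto simp: D_def)
  ultimately show ?thesis
    using \<open>y \<in> X\<close> by (simp add: proximal_cell_def D_def)
qed

lemma homeomorphism_funpow:
  assumes "homeomorphism X X f g"
  shows "homeomorphism X X (f ^^ n) (g ^^ n)"
proof (induction n)
  case 0
  then show ?case
    by (simp add: homeomorphism_ident)
next
  case (Suc n)
  have "homeomorphism X X (f \<circ> f ^^ n) (g ^^ n \<circ> g)"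
    using Suc assms by (rule homeomorphism_compose)
  then show ?case
    by (metis funpow.simps(2) funpow_Suc_right)
qed

lemma connected_wandering_subset_proximal_cell:
  assumes X: "has_finite_transversals X" and f: "homeomorphism X X f g"
    and J: "connected J" "J \<subseteq> X" "x \<in> J" and wandering: "\<And>n. n \<ge> 1 \<Longrightarrow> J \<inter> (f ^^ n) ` J = {}"
  shows "J \<subseteq> proximal_cell f X x"
proof
  fix y assume "y \<in> J"
  have hom: "homeomorphism X X (f ^^ n) (g ^^ n)" for n
    using f by (rule homeomorphism_funpow)
  have connected: "connected ((f ^^ n) ` J)" and in_X: "(f ^^ n) ` J \<subseteq> X" for n
    using hom[of n] J(1,2) unfolding homeomorphism_def
    by (blast intro: connected_continuous_image continuous_on_subset)+
  have "bij_betw f X X"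
    using f unfolding homeomorphism_def by (intro bij_betw_byWitness[of X g]) auto
  show "y \<in> proximal_cell f X x"
  proof (rule mem_proximal_cellI)
    show "y \<in> X"
      using \<open>y \<in> J\<close> J(2) by blast
    fix \<epsilon> :: real assume "\<epsilon> > 0"
    have "finite {n. \<exists>a\<in>(f ^^ n) ` J. \<exists>b\<in>(f ^^ n) ` J. \<epsilon> \<le> dist a b}"
      using X \<open>\<epsilon> > 0\<close> connected in_X disjoint_family_funpow_image[OF \<open>bij_betw f X X\<close> J(2) wandering]
      by (rule finite_wide_members_of_disjoint_connected)
    then obtain n where "n \<notin> {n. \<exists>a\<in>(f ^^ n) ` J. \<exists>b\<in>(f ^^ n) ` J. \<epsilon> \<le> dist a b}"
      using ex_new_if_finite[OF infinite_UNIV_nat] by blast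
    then show "\<exists>n. dist ((f ^^ n) x) ((f ^^ n) y) < \<epsilon>"
      using J(3) \<open>y \<in> J\<close> by (auto simp: not_le)
  qed
qed

lemma wandering_connected_neighbourhood:
  assumes "locally connected X" and "x \<in> X" and "x \<notin> nonwandering f X"
  obtains J where "openin (top_of_set X) J" "connected J" "x \<in> J"
    and "\<And>n. n \<ge> 1 \<Longrightarrow> J \<inter> (f ^^ n) ` J = {}"
proof -
  obtain U where U: "openin (top_of_set X) U" "x \<in> U" "\<And>n. n \<ge> 1 \<Longrightarrow> U \<inter> (f ^^ n) ` U = {}"
    using assms(2,3) unfolding nonwandering_def by blast
  then obtain J where "openin (top_of_set X) J" "connected J" "x \<in> J" "J \<subseteq> U"
    using assms(1) unfolding locally_connected by meson
  moreover have "J \<inter> (f ^^ n) ` J = {}" if "n \<ge> 1" for n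
    using U(3)[OF that] \<open>J \<subseteq> U\<close> by blast
  ultimately show ?thesis
    using that by blast
qed

lemma openin_in_sets_restrict_borel:
  assumes "sets M = sets (restrict_space borel X)" and "openin (top_of_set X) S"
  shows "S \<in> sets M"
proof -
  obtain T where "open T" "S = X \<inter> T"
    using assms(2) openin_open by blast
  then have "S = (\<inter>) X T" "T \<in> sets borel"
    by simp_all
  then show ?thesis
    unfolding assms(1) sets_restrict_space by (rule image_eqI)
qed

theorem lemma3p5:
  fixes X :: "complex set" and f :: "complex \<Rightarrow> complex" and M :: "complex measure"
  assumes "X = sphere 0 1 \<or> X = complex_of_real ` {0..1}"
    and "\<exists>g. homeomorphism X X f g"
    and "sets M = sets (restrict_space borel X)"
    and "prob_space M"
    and "inner_distal f X M"
  shows "support_on X M \<subseteq> nonwandering f X"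
proof
  fix x assume support: "x \<in> support_on X M"
  then have "x \<in> X"
    by (simp add: support_on_def)
  obtain g where f: "homeomorphism X X f g"
    using assms(2) by blast
  have X: "has_finite_transversals X" "locally connected X"
    using assms(1) by (auto simp: has_finite_transversals_unit_circle locally_connected_sphere
        has_finite_transversals_unit_interval locally_connected_unit_interval)
  show "x \<in> nonwandering f X"
  proof (rule ccontr)
    assume "x \<notin> nonwandering f X"
    then obtain J where J: "openin (top_of_set X) J" "connected J" "x \<in> J"
      and wandering: "\<And>n. n \<ge> 1 \<Longrightarrow> J \<inter> (f ^^ n) ` J = {}"
      using wandering_connected_neighbourhood[OF X(2) \<open>x \<in> X\<close>] by blast
    let ?I = "top_of_set X interior_of proximal_cell f X x"
    have "J \<subseteq> proximal_cell f X x"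
      by (rule connected_wandering_subset_proximal_cell[OF X(1) f J(2) openin_imp_subset[OF J(1)] J(3) wandering])
    then have "J \<subseteq> ?I"
      using J(1) by (rule interior_of_maximal)
    have "0 < emeasure M J"
      using support J(1,3) unfolding support_on_def by blast
    also have "\<dots> \<le> emeasure M ?I"
      by (intro emeasure_mono[OF \<open>J \<subseteq> ?I\<close>] openin_in_sets_restrict_borel[OF assms(3)] openin_interior_of)
    also have "\<dots> = 0"
      using assms(5) \<open>x \<in> X\<close> unfolding inner_distal_def by blast
    finally show False
      by simp
  qed
qed

end
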